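(* For every Dale matrix $W\in\mathbb{D}_n$ satisfying the Ground Assumption, the code $\mathcal{C}(W)$ is intersection-complete (if $\sigma,\nu\in\mathcal{C}(W)$ then $\sigma\cap\nu\in\mathcal{C}(W)$), and consequently $\mathcal{C}(W)$ is an open convex code.
   Context: Threshold-linear network: $\dot x_i=-x_i+[\sum_j W_{ij}x_j+b_i]_+$ with $[y]_+=\max(0,y)$; a fixed point is $x^*$ with $x^*=[Wx^*+b]_+$. A Dale matrix $W\in\mathbb{D}_n$ is an $n\times n$ real matrix with a partition $[n]=\mathcal{E}\sqcup\mathcal{I}$ such that $W_{ii}=0$, $W_{ji}\ge0$ for all $j$ if $i\in\mathcal{E}$, $W_{ji}\le0$ for all $j$ if $i\in\mathcal{I}$. Ground Assumption: $(I-W)_\sigma$ nonsingular for every nonempty $\sigma\subset[n]$. Excitatory support: $\mathrm{supp}_+x=\{i\in\mathcal{E}:x_i>0\}$. Combinatorial code: $\mathcal{C}(W)=\{\mathrm{supp}_+x^*: b\in\mathbb{R}^n_{\ge0},\ x^*\in\mathbb{R}^n_{\ge0}\text{ a fixed point of }(W,b)\}\subset 2^\mathcal{E}$. For a collection $\mathcal{U}=\{U_i\}_{i\in\mathcal{E}}$ of subsets of $\mathbb{R}^d$, $\mathrm{code}(\mathcal{U})=\{\sigma\subset\mathcal{E}: (\bigcap_{i\in\sigma}U_i)\setminus\bigcup_{j\notin\sigma}U_j\neq\varnothing\}$ (with $\bigcap_{i\in\varnothing}U_i=\mathbb{R}^d$). A code $\mathcal{C}\subset 2^{\mathcal{E}}$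 is open convex if $\mathcal{C}=\mathrm{code}(\mathcal{U})$ for some collection $\mathcal{U}$ of open convex subsets of some $\mathbb{R}^d$, $d\ge1$. *)

theory Defs
  imports "Jordan_Normal_Form.Determinant" "Jordan_Normal_Form.DL_Submatrix"
          "HOL-Analysis.Abstract_Euclidean_Space"
begin

definition dale_matrix :: "nat \<Rightarrow> real mat \<Rightarrow> nat set \<Rightarrow> nat set \<Rightarrow> bool" where
  "dale_matrix n W E I \<longleftrightarrow> W \<in> carrier_mat n n \<and> E \<union> I = {..<n} \<and> E \<inter> I = {} \<and>
     (\<forall>i<n. W $$ (i,i) = 0) \<and>
     (\<forall>i\<in>E. \<forall>j<n. W $$ (j,i) \<ge> 0) \<and>
     (\<forall>i\<in>I. \<forall>j<n. W $$ (j,i) \<le> 0)"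

definition ground_assumption :: "nat \<Rightarrow> real mat \<Rightarrow> bool" where
  "ground_assumption n W \<longleftrightarrow>
     (\<forall>\<sigma>. \<sigma> \<noteq> {} \<and> \<sigma> \<subseteq> {..<n} \<longrightarrow> det (submatrix (1\<^sub>m n - W) \<sigma> \<sigma>) \<noteq> 0)"

definition is_fixed_point :: "nat \<Rightarrow> real mat \<Rightarrow> real Matrix.vec \<Rightarrow> real Matrix.vec \<Rightarrow> bool" where
  "is_fixed_point n W b x \<longleftrightarrow> x \<in> carrier_vec n \<and> b \<in> carrier_vec n \<and>
     (\<forall>i<n. vec_index x i = max 0 (vec_index (Matrix.mult_mat_vec W x) i + vec_index b i))"

definition supp_plus :: "nat set \<Rightarrow> real Matrix.vec \<Rightarrow> nat set" where
  "supp_plus E x = {i \<in> E. vec_index x i > 0}"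

definition comb_code :: "nat \<Rightarrow> real mat \<Rightarrow> nat set \<Rightarrow> nat set set" where
  "comb_code n W E = {supp_plus E x | b x. b \<in> carrier_vec n \<and> (\<forall>i<n. vec_index b i \<ge> 0) \<and>
      x \<in> carrier_vec n \<and> (\<forall>i<n. vec_index x i \<ge> 0) \<and> is_fixed_point n W b x}"

definition intersection_complete :: "'a set set \<Rightarrow> bool" where
  "intersection_complete C \<longleftrightarrow> (\<forall>\<sigma>\<in>C. \<forall>\<nu>\<in>C. \<sigma> \<inter> \<nu> \<in> C)"

text \<open>R^d is modelled as topspace (Euclidean_space d): functions nat => real vanishing from d on.\<close>

definition convex_Rd :: "(nat \<Rightarrow> real) set \<Rightarrow> bool" where
  "convex_Rd U \<longleftrightarrow> (\<forall>x\<in>U. \<forall>y\<in>U. \<forall>t::real. 0 \<le> t \<and> t \<le> 1 \<longrightarrow> (\<lambda>i. (1 - t) * x i + t * y i) \<in> U)"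

definition code_of :: "nat \<Rightarrow> nat set \<Rightarrow> (nat \<Rightarrow> (nat \<Rightarrow> real) set) \<Rightarrow> nat set set" where
  "code_of d E U = {\<sigma>. \<sigma> \<subseteq> E \<and>
      (\<exists>p\<in>topspace (Euclidean_space d). (\<forall>i\<in>\<sigma>. p \<in> U i) \<and> (\<forall>j\<in>E - \<sigma>. p \<notin> U j))}"

definition open_convex_code :: "nat set \<Rightarrow> nat set set \<Rightarrow> bool" where
  "open_convex_code E C \<longleftrightarrow> (\<exists>d\<ge>1. \<exists>U. (\<forall>i\<in>E. openin (Euclidean_space d) (U i) \<and> convex_Rd (U i))
      \<and> C = code_of d E U)"

end

theory Submission
  imports Defs
begin

text \<open>A nonnegative x is a fixed point for some nonnegative input b exactly when W x \<le> x
  (take b = x - W x), so the code is the set of excitatory supports of such sub-solutions.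
  Dale's law makes W x monotone in the excitatory and antitone in the inhibitory
  coordinates; hence taking the minimum of two sub-solutions on excitatory and the maximum
  on inhibitory neurons yields a sub-solution whose excitatory support is the intersection,
  and the sum of two sub-solutions realises the union. A code containing the empty set and
  closed under unions and intersections is open convex: for each neuron i let J i be the
  smallest codeword containing i and let U i be the open orthant where all coordinates in
  J i are positive.\<close>

unbundle no vec_syntax
no_notation matrix_vector_mult (infixl "*v" 70)
notation Matrix.mult_mat_vec (infixl "*v" 70)

definition nonneg_subsolution :: "nat \<Rightarrow> real mat \<Rightarrow> real Matrix.vec \<Rightarrow> bool" where
  "nonneg_subsolution n W x \<longleftrightarrow>
     x \<in> carrier_vec n \<and> (\<forall>i<n. 0 \<le> x $ i) \<and> (\<forall>i<n. (W *v x) $ i \<le> x $ i)"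

lemma mult_mat_vec_nth_sum:
  assumes "W \<in> carrier_mat n n" "x \<in> carrier_vec n" "i < n"
  shows "(W *v x) $ i = (\<Sum>k<n. W $$ (i,k) * x $ k)"
  using assms by (auto simp: scalar_prod_def lessThan_atLeast0 intro!: sum.cong)

lemma comb_code_eq_supp_subsolutions:
  "comb_code n W E = supp_plus E ` {x. nonneg_subsolution n W x}"
proof (intro equalityI subsetI)
  fix \<sigma> assume "\<sigma> \<in> comb_code n W E"
  then obtain b x where b: "\<forall>i<n. b $ i \<ge> 0" and x: "x \<in> carrier_vec n" "\<forall>i<n. x $ i \<ge> 0"
    and fp: "is_fixed_point n W b x" and \<sigma>: "\<sigma> = supp_plus E x"
    unfolding comb_code_def by blast
  have "(W *v x) $ i \<le> x $ i" if i: "i < n" for i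
  proof -
    have "x $ i = max 0 ((W *v x) $ i + b $ i)" using fp i unfolding is_fixed_point_def by blast
    then show ?thesis using b i by force
  qed
  then show "\<sigma> \<in> supp_plus E ` {x. nonneg_subsolution n W x}"
    using x \<sigma> unfolding nonneg_subsolution_def by blast
next
  fix \<sigma> assume "\<sigma> \<in> supp_plus E ` {x. nonneg_subsolution n W x}"
  then obtain x where x: "nonneg_subsolution n W x" and \<sigma>: "\<sigma> = supp_plus E x" by blast
  define b where "b = Matrix.vec n (\<lambda>i. x $ i - (W *v x) $ i)"
  have "b \<in> carrier_vec n" "\<forall>i<n. b $ i \<ge> 0" "is_fixed_point n W b x"
    using x unfolding b_def nonneg_subsolution_def is_fixed_point_def by auto
  then show "\<sigma> \<in> comb_code n W E"
    using x \<sigma> unfolding comb_code_def nonneg_subsolution_def by blast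
qed

lemma nonneg_subsolution_add:
  assumes W: "W \<in> carrier_mat n n"
    and x: "nonneg_subsolution n W x" and y: "nonneg_subsolution n W y"
  shows "nonneg_subsolution n W (x + y)"
proof -
  have xy: "x \<in> carrier_vec n" "y \<in> carrier_vec n"
    using x y unfolding nonneg_subsolution_def by blast+
  have "W *v (x + y) = W *v x + W *v y"
    using W xy by (rule mult_add_distrib_mat_vec)
  then have "(W *v (x + y)) $ i = (W *v x) $ i + (W *v y) $ i" if "i < n" for i
    using W that by simp
  moreover have "(x + y) $ i = x $ i + y $ i" if "i < n" for i
    using xy that by simp
  ultimately show ?thesis
    using x y xy unfolding nonneg_subsolution_def by (simp add: add_mono)
qed

lemma dale_mult_mat_vec_mono:
  assumes D: "dale_matrix n W E I" and x: "x \<in> carrier_vec n" and z: "z \<in> carrier_vec n"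
    and exc: "\<forall>k\<in>E. z $ k \<le> x $ k" and inh: "\<forall>k\<in>I. x $ k \<le> z $ k" and i: "i < n"
  shows "(W *v z) $ i \<le> (W *v x) $ i"
proof -
  have W: "W \<in> carrier_mat n n" using D unfolding dale_matrix_def by blast
  have "W $$ (i,k) * z $ k \<le> W $$ (i,k) * x $ k" if k: "k < n" for k
  proof (cases "k \<in> E")
    case True
    then show ?thesis
      using D exc i unfolding dale_matrix_def by (simp add: mult_left_mono)
  next
    case False
    with D k have "k \<in> I" unfolding dale_matrix_def by blast
    then show ?thesis
      using D inh i unfolding dale_matrix_def by (simp add: mult_left_mono_neg)
  qed
  then show ?thesis
    unfolding mult_mat_vec_nth_sum[OF W z i] mult_mat_vec_nth_sum[OF W x i]
    by (intro sum_mono) simp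
qed

lemma nonneg_subsolution_dale_meet:
  assumes D: "dale_matrix n W E I"
    and x: "nonneg_subsolution n W x" and y: "nonneg_subsolution n W y"
  shows "nonneg_subsolution n W
           (Matrix.vec n (\<lambda>i. if i \<in> E then min (x $ i) (y $ i) else max (x $ i) (y $ i)))"
    (is "nonneg_subsolution n W ?z")
proof -
  have disj: "E \<inter> I = {}" and EI: "E \<union> I = {..<n}" using D unfolding dale_matrix_def by auto
  have xy: "x \<in> carrier_vec n" "y \<in> carrier_vec n"
    using x y unfolding nonneg_subsolution_def by blast+
  have "?z $ k \<le> x $ k \<and> ?z $ k \<le> y $ k" if k: "k \<in> E" for k
  proof -
    have "k < n" using EI k by blast
    then show ?thesis using k by simp
  qed
  moreover have "x $ k \<le> ?z $ k \<and> y $ k \<le> ?z $ k" if k: "k \<in> I" for k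
  proof -
    have "k < n" "k \<notin> E" using EI disj k by blast+
    then show ?thesis by simp
  qed
  ultimately have Wz: "(W *v ?z) $ i \<le> (W *v x) $ i" "(W *v ?z) $ i \<le> (W *v y) $ i"
    if "i < n" for i
    using that xy by (auto intro!: dale_mult_mat_vec_mono[OF D])
  have "0 \<le> ?z $ i \<and> (W *v ?z) $ i \<le> ?z $ i" if i: "i < n" for i
  proof -
    have "0 \<le> x $ i" "0 \<le> y $ i" "(W *v x) $ i \<le> x $ i" "(W *v y) $ i \<le> y $ i"
      using x y i unfolding nonneg_subsolution_def by auto
    then show ?thesis using Wz[OF i] i by (auto simp: min_def max_def)
  qed
  then show ?thesis unfolding nonneg_subsolution_def by simp
qed

lemma comb_code_subset_Pow: "comb_code n W E \<subseteq> Pow E"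
  unfolding comb_code_def supp_plus_def by blast

lemma empty_in_comb_code:
  assumes "W \<in> carrier_mat n n" "E \<subseteq> {..<n}"
  shows "{} \<in> comb_code n W E"
proof -
  have "nonneg_subsolution n W (0\<^sub>v n)"
    using assms unfolding nonneg_subsolution_def by simp
  moreover have "supp_plus E (0\<^sub>v n) = {}"
    using assms(2) unfolding supp_plus_def by auto
  ultimately show ?thesis
    unfolding comb_code_eq_supp_subsolutions by (metis image_eqI mem_Collect_eq)
qed

lemma comb_code_Un:
  assumes W: "W \<in> carrier_mat n n" and E: "E \<subseteq> {..<n}"
    and "\<sigma> \<in> comb_code n W E" "\<nu> \<in> comb_code n W E"
  shows "\<sigma> \<union> \<nu> \<in> comb_code n W E"
proof -
  obtain x y where x: "nonneg_subsolution n W x" and y: "nonneg_subsolution n W y"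
    and \<sigma>: "\<sigma> = supp_plus E x" and \<nu>: "\<nu> = supp_plus E y"
    using assms(3,4) unfolding comb_code_eq_supp_subsolutions by blast
  have "0 < (x + y) $ k \<longleftrightarrow> 0 < x $ k \<or> 0 < y $ k" if "k \<in> E" for k
  proof -
    have "k < n" "x \<in> carrier_vec n" "y \<in> carrier_vec n" "0 \<le> x $ k" "0 \<le> y $ k"
      using x y E that unfolding nonneg_subsolution_def by auto
    then show ?thesis by auto
  qed
  then have "\<sigma> \<union> \<nu> = supp_plus E (x + y)"
    unfolding \<sigma> \<nu> supp_plus_def by auto
  then show ?thesis
    using nonneg_subsolution_add[OF W x y] unfolding comb_code_eq_supp_subsolutions by blast
qed

lemma intersection_complete_comb_code:
  assumes D: "dale_matrix n W E I"
  shows "intersection_complete (comb_code n W E)"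
  unfolding intersection_complete_def
proof (intro ballI)
  fix \<sigma> \<nu> assume "\<sigma> \<in> comb_code n W E" "\<nu> \<in> comb_code n W E"
  then obtain x y where x: "nonneg_subsolution n W x" and y: "nonneg_subsolution n W y"
    and \<sigma>: "\<sigma> = supp_plus E x" and \<nu>: "\<nu> = supp_plus E y"
    unfolding comb_code_eq_supp_subsolutions by blast
  have E: "E \<subseteq> {..<n}" using D unfolding dale_matrix_def by blast
  have "\<sigma> \<inter> \<nu> = supp_plus E
      (Matrix.vec n (\<lambda>i. if i \<in> E then min (x $ i) (y $ i) else max (x $ i) (y $ i)))"
    using E unfolding \<sigma> \<nu> supp_plus_def by auto
  then show "\<sigma> \<inter> \<nu> \<in> comb_code n W E"
    using nonneg_subsolution_dale_meet[OF D x y] unfolding comb_code_eq_supp_subsolutions by blast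
qed

definition positive_orthant :: "nat \<Rightarrow> nat set \<Rightarrow> (nat \<Rightarrow> real) set" where
  "positive_orthant d K = {p \<in> topspace (Euclidean_space d). \<forall>k\<in>K. 0 < p k}"

definition minimal_codeword :: "'a set set \<Rightarrow> 'a \<Rightarrow> 'a set" where
  "minimal_codeword C i = \<Inter>{\<sigma>\<in>C. i \<in> \<sigma>}"

definition codeword_region :: "nat \<Rightarrow> nat set set \<Rightarrow> nat \<Rightarrow> (nat \<Rightarrow> real) set" where
  "codeword_region d C i =
     (if \<exists>\<sigma>\<in>C. i \<in> \<sigma> then positive_orthant d (minimal_codeword C i) else {})"

lemma openin_positive_orthant:
  assumes "finite K"
  shows "openin (Euclidean_space d) (positive_orthant d K)"
  using assms
proof (induction K rule: finite_induct)
  case empty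
  then show ?case by (simp add: positive_orthant_def)
next
  case (insert k K)
  have "continuous_map (Euclidean_space d) euclideanreal (\<lambda>p. p k)"
    unfolding Euclidean_space_def
    by (intro continuous_map_from_subtopology continuous_map_product_projection) simp
  then have "openin (Euclidean_space d) {p \<in> topspace (Euclidean_space d). p k \<in> {0<..}}"
    by (rule openin_continuous_map_preimage) simp
  moreover have "positive_orthant d (insert k K) =
      {p \<in> topspace (Euclidean_space d). p k \<in> {0<..}} \<inter> positive_orthant d K"
    unfolding positive_orthant_def by auto
  ultimately show ?case using insert.IH by (simp add: openin_Int)
qed

lemma convex_Rd_positive_orthant: "convex_Rd (positive_orthant d K)"
  unfolding convex_Rd_def positive_orthant_def
proof (intro ballI allI impI)
  fix x y and t :: real
  assume x: "x \<in> {p \<in> topspace (Euclidean_space d). \<forall>k\<in>K. 0 < p k}"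
    and y: "y \<in> {p \<in> topspace (Euclidean_space d). \<forall>k\<in>K. 0 < p k}" and t: "0 \<le> t \<and> t \<le> 1"
  have "0 < (1 - t) * x k + t * y k" if "k \<in> K" for k
  proof (cases "t = 0")
    case False
    then have "0 < t * y k" using t y that by simp
    moreover have "0 \<le> (1 - t) * x k" using t x that by (intro mult_nonneg_nonneg) auto
    ultimately show ?thesis by linarith
  qed (use x that in simp)
  then show "(\<lambda>i. (1 - t) * x i + t * y i) \<in> {p \<in> topspace (Euclidean_space d). \<forall>k\<in>K. 0 < p k}"
    using x y by (auto simp: topspace_Euclidean_space)
qed

lemma Inter_mem_if_intersection_complete:
  assumes "finite F" "F \<noteq> {}" "F \<subseteq> C" "intersection_complete C"
  shows "\<Inter>F \<in> C"
  using assms unfolding intersection_complete_def by (induction F rule: finite_ne_induct) auto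

lemma Union_mem_if_Un_closed:
  assumes "finite F" "F \<subseteq> C" "{} \<in> C" "\<forall>\<sigma>\<in>C. \<forall>\<nu>\<in>C. \<sigma> \<union> \<nu> \<in> C"
  shows "\<Union>F \<in> C"
  using assms by (induction F rule: finite_induct) auto

lemma minimal_codeword_mem:
  assumes "finite C" "intersection_complete C" "\<sigma> \<in> C" "i \<in> \<sigma>"
  shows "minimal_codeword C i \<in> C"
  unfolding minimal_codeword_def using assms by (intro Inter_mem_if_intersection_complete) auto

lemma minimal_codeword_subset: "\<sigma> \<in> C \<Longrightarrow> i \<in> \<sigma> \<Longrightarrow> minimal_codeword C i \<subseteq> \<sigma>"
  unfolding minimal_codeword_def by auto

lemma self_mem_minimal_codeword: "i \<in> minimal_codeword C i"
  unfolding minimal_codeword_def by auto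

lemma code_subset_code_of_codeword_regions:
  assumes "E \<subseteq> {..<d}" "C \<subseteq> Pow E"
  shows "C \<subseteq> code_of d E (codeword_region d C)"
proof
  fix \<sigma> assume \<sigma>: "\<sigma> \<in> C"
  define p where "p k = (if k \<in> \<sigma> then 1 else 0::real)" for k
  have p: "p \<in> topspace (Euclidean_space d)"
    using \<sigma> assms by (force simp: p_def topspace_Euclidean_space)
  have "p \<in> codeword_region d C i" if "i \<in> \<sigma>" for i
    using minimal_codeword_subset[OF \<sigma> that] \<sigma> that p
    by (auto simp: codeword_region_def positive_orthant_def p_def)
  moreover have "p \<notin> codeword_region d C j" if "j \<notin> \<sigma>" for j
    using self_mem_minimal_codeword[of j C] that
    by (auto simp: codeword_region_def positive_orthant_def p_def)
  ultimately show "\<sigma> \<in> code_of d E (codeword_region d C)"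
    using \<sigma> assms(2) p unfolding code_of_def by blast
qed

text \<open>A point lying in the regions of all i \<in> \<sigma> lies in the region of every neuron of the
  minimal codeword of i, so \<sigma> is the union of the minimal codewords of its elements.\<close>

lemma code_of_codeword_regions_subset:
  assumes E: "finite E" and C: "C \<subseteq> Pow E" and emp: "{} \<in> C"
    and Un: "\<forall>\<sigma>\<in>C. \<forall>\<nu>\<in>C. \<sigma> \<union> \<nu> \<in> C" and Int: "intersection_complete C"
  shows "code_of d E (codeword_region d C) \<subseteq> C"
proof
  fix \<sigma> assume "\<sigma> \<in> code_of d E (codeword_region d C)"
  then have "\<sigma> \<subseteq> E \<and> (\<exists>p. (\<forall>i\<in>\<sigma>. p \<in> codeword_region d C i) \<and>
      (\<forall>j\<in>E - \<sigma>. p \<notin> codeword_region d C j))"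
    unfolding code_of_def by auto
  then obtain p where \<sigma>E: "\<sigma> \<subseteq> E" and pin: "\<forall>i\<in>\<sigma>. p \<in> codeword_region d C i"
    and pout: "\<forall>j\<in>E - \<sigma>. p \<notin> codeword_region d C j"
    by blast
  have finC: "finite C" using rev_finite_subset[OF finite_Pow_iff[THEN iffD2, OF E] C] .
  have covered: "\<exists>\<tau>\<in>C. i \<in> \<tau>" if i: "i \<in> \<sigma>" for i
  proof (rule ccontr)
    assume "\<not> (\<exists>\<tau>\<in>C. i \<in> \<tau>)"
    then have "codeword_region d C i = {}" by (simp add: codeword_region_def)
    with pin i show False by blast
  qed
  have J: "minimal_codeword C i \<in> C" "p \<in> positive_orthant d (minimal_codeword C i)"
    if i: "i \<in> \<sigma>" for i
  proof -
    obtain \<tau> where "\<tau> \<in> C" "i \<in> \<tau>" using covered[OF i] by blast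
    then show "minimal_codeword C i \<in> C" by (rule minimal_codeword_mem[OF finC Int])
    show "p \<in> positive_orthant d (minimal_codeword C i)"
      using bspec[OF pin i] covered[OF i] by (simp add: codeword_region_def)
  qed
  have "minimal_codeword C i \<subseteq> \<sigma>" if i: "i \<in> \<sigma>" for i
  proof
    fix k assume k: "k \<in> minimal_codeword C i"
    then have Jk: "minimal_codeword C k \<subseteq> minimal_codeword C i"
      using J(1)[OF i] by (rule minimal_codeword_subset[rotated])
    have "p \<in> positive_orthant d (minimal_codeword C k)"
      using J(2)[OF i] Jk unfolding positive_orthant_def by blast
    moreover have "\<exists>\<tau>\<in>C. k \<in> \<tau>" using J(1)[OF i] k by blast
    ultimately have "p \<in> codeword_region d C k" by (simp add: codeword_region_def)
    moreover have "k \<in> E" using J(1)[OF i] k C by blast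
    ultimately show "k \<in> \<sigma>" using pout by blast
  qed
  then have "\<Union>(minimal_codeword C ` \<sigma>) \<subseteq> \<sigma>" by (rule UN_least)
  moreover have "\<sigma> \<subseteq> \<Union>(minimal_codeword C ` \<sigma>)"
    using self_mem_minimal_codeword by fast
  ultimately have \<sigma>_eq: "\<sigma> = \<Union>(minimal_codeword C ` \<sigma>)" by (rule subset_antisym[rotated])
  have "\<Union>(minimal_codeword C ` \<sigma>) \<in> C"
  proof (rule Union_mem_if_Un_closed[OF _ _ emp Un])
    show "finite (minimal_codeword C ` \<sigma>)" using finite_imageI[OF rev_finite_subset[OF E \<sigma>E]] .
    show "minimal_codeword C ` \<sigma> \<subseteq> C" using J(1) by blast
  qed
  then show "\<sigma> \<in> C" by (subst \<sigma>_eq)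
qed

lemma openin_codeword_region:
  assumes "finite E" "C \<subseteq> Pow E"
  shows "openin (Euclidean_space d) (codeword_region d C i)"
proof (cases "\<exists>\<sigma>\<in>C. i \<in> \<sigma>")
  case True
  then obtain \<sigma> where "\<sigma> \<in> C" "i \<in> \<sigma>" by blast
  then have "finite (minimal_codeword C i)"
    using minimal_codeword_subset assms by (meson PowD finite_subset subsetD)
  then show ?thesis
    using True unfolding codeword_region_def by (simp add: openin_positive_orthant)
qed (simp add: codeword_region_def)

lemma convex_Rd_codeword_region: "convex_Rd (codeword_region d C i)"
  by (cases "\<exists>\<sigma>\<in>C. i \<in> \<sigma>")
    (simp_all add: codeword_region_def convex_Rd_positive_orthant, simp add: convex_Rd_def)

lemma open_convex_code_if_lattice:
  assumes E: "finite E" and C: "C \<subseteq> Pow E" and "{} \<in> C"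
    and "\<forall>\<sigma>\<in>C. \<forall>\<nu>\<in>C. \<sigma> \<union> \<nu> \<in> C" and "intersection_complete C"
  shows "open_convex_code E C"
proof -
  obtain k where "E \<subseteq> {..<k}" using finite_nat_bounded[OF E] by blast
  then obtain d where d: "E \<subseteq> {..<d}" "d \<ge> 1" by (intro that[of "Suc k"]) auto
  have "C = code_of d E (codeword_region d C)"
    using code_subset_code_of_codeword_regions[OF d(1) C]
      code_of_codeword_regions_subset[OF assms] by blast
  then show ?thesis
    unfolding open_convex_code_def
    using d(2) openin_codeword_region[OF E C] convex_Rd_codeword_region by blast
qed

theorem mainTheorem7:
  fixes n :: nat and W :: "real mat" and E I :: "nat set"
  assumes "dale_matrix n W E I"
    and "ground_assumption n W"
  shows "intersection_complete (comb_code n W E) \<and> open_convex_code E (comb_code n W E)"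
proof -
  have E: "E \<subseteq> {..<n}" and W: "W \<in> carrier_mat n n"
    using assms(1) unfolding dale_matrix_def by blast+
  have Int: "intersection_complete (comb_code n W E)"
    using assms(1) by (rule intersection_complete_comb_code)
  have Un: "\<forall>\<sigma>\<in>comb_code n W E. \<forall>\<nu>\<in>comb_code n W E. \<sigma> \<union> \<nu> \<in> comb_code n W E"
    using comb_code_Un[OF W E] by blast
  have "finite E" using E finite_lessThan by (rule finite_subset)
  then have "open_convex_code E (comb_code n W E)"
    using comb_code_subset_Pow empty_in_comb_code[OF W E] Un Int by (rule open_convex_code_if_lattice)
  with Int show ?thesis by blast
qed

end
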